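(* Let $N\geq3$. The critical point $Q_2=\left(0,-\frac{N-2}{m},0\right)$ of system (S2) is an unstable node if $m<p<\frac{m(N+\sigma)}{N-2}$, and a saddle point if $p>\frac{m(N+\sigma)}{N-2}$, with a two-dimensional unstable manifold contained in the plane $\{z=0\}$ and a one-dimensional stable manifold contained in the plane $\{x=0\}$. For $m<p<\frac{m(N+\sigma)}{N-2}$, the critical point $Q_3=\left(0,-\frac{\sigma+2}{p-m},Z_0\right)$, where $$Z_0=\frac{(\sigma+2)[m(N+\sigma)-p(N-2)]}{(p-m)^2},$$ is a saddle point with a two-dimensional unstable manifold and a one-dimensional stable manifold contained in the plane $\{x=0\}$. Trajectories stemming from $Q_2$, respectively $Q_3$, correspond to profiles with $f(\xi)\sim C\xi^{-(N-2)/m}$, respectively $f(\xi)\sim C\xi^{-(\sigma+2)/(p-m)}$, as $\xi\to0$, for some $C>0$.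
   Context: Let $m>1$, $\sigma>0$, $p>m$, $L=\sigma(m-1)+2(p-1)$, $\alpha=(\sigma+2)/L$, $\beta=(p-m)/L$. Positive profiles $f$ solve $(f^m)''+\frac{N-1}{\xi}(f^m)'+\alpha f+\beta\xi f'-\xi^\sigma f^p=0$. Set $x=\frac{\alpha}{m}\xi^2f^{1-m}$, $y=\xi f'/f$, $z=\frac1m\xi^{\sigma+2}f^{p-m}$, $\eta_1=\ln\xi$. Then $(x,y,z)$ solves the autonomous system (S2): $$\dot x=x(2-(m-1)y),\quad \dot y=-x-(N-2)y+z-my^2-\tfrac{p-m}{\sigma+2}xy,\quad \dot z=z(\sigma+2+(p-m)y).$$ *)

theory Defs
  imports "HOL-Analysis.Analysis" "HOL-Computational_Algebra.Polynomial"
begin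

definition L_par :: "real \<Rightarrow> real \<Rightarrow> real \<Rightarrow> real" where
  "L_par m \<sigma> p = \<sigma> * (m - 1) + 2 * (p - 1)"

definition alpha_par :: "real \<Rightarrow> real \<Rightarrow> real \<Rightarrow> real" where
  "alpha_par m \<sigma> p = (\<sigma> + 2) / L_par m \<sigma> p"

definition beta_par :: "real \<Rightarrow> real \<Rightarrow> real \<Rightarrow> real" where
  "beta_par m \<sigma> p = (p - m) / L_par m \<sigma> p"

definition S2 :: "real \<Rightarrow> nat \<Rightarrow> real \<Rightarrow> real \<Rightarrow> real^3 \<Rightarrow> real^3" where
  "S2 m N \<sigma> p v =
     (let x = v$1; y = v$2; z = v$3 in
      vector [x * (2 - (m - 1) * y),
              - x - (real N - 2) * y + z - m * y^2 - (p - m) / (\<sigma> + 2) * x * y,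
              z * (\<sigma> + 2 + (p - m) * y)])"

definition charpoly :: "real^'n^'n \<Rightarrow> real poly" where
  "charpoly M = det (\<chi> i j. if i = j then [:- (M$i$j), 1:] else [:- (M$i$j):])"

definition ccharpoly :: "real^'n^'n \<Rightarrow> complex poly" where
  "ccharpoly M = map_poly complex_of_real (charpoly M)"

definition eigenvalues :: "real^'n^'n \<Rightarrow> complex set" where
  "eigenvalues M = {c. poly (ccharpoly M) c = 0}"

definition unstable_dim :: "real^'n^'n \<Rightarrow> nat" where
  "unstable_dim M = (\<Sum>c \<in> {c \<in> eigenvalues M. Re c > 0}. order c (ccharpoly M))"

definition stable_dim :: "real^'n^'n \<Rightarrow> nat" where
  "stable_dim M = (\<Sum>c \<in> {c \<in> eigenvalues M. Re c < 0}. order c (ccharpoly M))"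

definition hyperbolic :: "real^'n^'n \<Rightarrow> bool" where
  "hyperbolic M \<longleftrightarrow> (\<forall>c \<in> eigenvalues M. Re c \<noteq> 0)"

definition unstable_node_matrix :: "real^'n^'n \<Rightarrow> bool" where
  "unstable_node_matrix M \<longleftrightarrow> (\<forall>c \<in> eigenvalues M. Im c = 0 \<and> Re c > 0)"

definition saddle_matrix :: "real^'n^'n \<Rightarrow> bool" where
  "saddle_matrix M \<longleftrightarrow> hyperbolic M \<and> unstable_dim M > 0 \<and> stable_dim M > 0"

definition jacobian_is :: "(real^'n \<Rightarrow> real^'n) \<Rightarrow> real^'n \<Rightarrow> real^'n^'n \<Rightarrow> bool" where
  "jacobian_is F Q M \<longleftrightarrow> (F has_derivative (\<lambda>h. M *v h)) (at Q)"

definition critical_point :: "(real^'n \<Rightarrow> real^'n) \<Rightarrow> real^'n \<Rightarrow> bool" where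
  "critical_point F Q \<longleftrightarrow> F Q = 0"

definition unstable_node :: "(real^'n \<Rightarrow> real^'n) \<Rightarrow> real^'n \<Rightarrow> bool" where
  "unstable_node F Q \<longleftrightarrow> critical_point F Q \<and> (\<exists>M. jacobian_is F Q M \<and> unstable_node_matrix M)"

definition saddle_point :: "(real^'n \<Rightarrow> real^'n) \<Rightarrow> real^'n \<Rightarrow> bool" where
  "saddle_point F Q \<longleftrightarrow> critical_point F Q \<and> (\<exists>M. jacobian_is F Q M \<and> saddle_matrix M)"

text \<open>Dimensions of the linear unstable / stable subspaces at Q
  (equal to the dimensions of the unstable / stable manifolds).\<close>
definition unstable_manifold_dim :: "(real^'n \<Rightarrow> real^'n) \<Rightarrow> real^'n \<Rightarrow> nat \<Rightarrow> bool" where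
  "unstable_manifold_dim F Q k \<longleftrightarrow> (\<exists>M. jacobian_is F Q M \<and> unstable_dim M = k)"

definition stable_manifold_dim :: "(real^'n \<Rightarrow> real^'n) \<Rightarrow> real^'n \<Rightarrow> nat \<Rightarrow> bool" where
  "stable_manifold_dim F Q k \<longleftrightarrow> (\<exists>M. jacobian_is F Q M \<and> stable_dim M = k)"

definition unstable_manifold :: "(real^'n \<Rightarrow> real^'n) \<Rightarrow> real^'n \<Rightarrow> (real^'n) set" where
  "unstable_manifold F Q = {v. \<exists>u. u 0 = v \<and>
      (\<forall>t \<in> {..0}. (u has_vector_derivative F (u t)) (at t within {..0})) \<and>
      (u \<longlongrightarrow> Q) at_bot}"

definition stable_manifold :: "(real^'n \<Rightarrow> real^'n) \<Rightarrow> real^'n \<Rightarrow> (real^'n) set" where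
  "stable_manifold F Q = {v. \<exists>u. u 0 = v \<and>
      (\<forall>t \<in> {0..}. (u has_vector_derivative F (u t)) (at t within {0..})) \<and>
      (u \<longlongrightarrow> Q) at_top}"

definition is_profile :: "real \<Rightarrow> nat \<Rightarrow> real \<Rightarrow> real \<Rightarrow> real \<Rightarrow> (real \<Rightarrow> real) \<Rightarrow> bool" where
  "is_profile m N \<sigma> p R f \<longleftrightarrow> (\<exists>df g1 g2. \<forall>\<xi> \<in> {0<..<R}.
      f \<xi> > 0 \<and>
      (f has_real_derivative df \<xi>) (at \<xi>) \<and>
      ((\<lambda>s. f s powr m) has_real_derivative g1 \<xi>) (at \<xi>) \<and>
      (g1 has_real_derivative g2 \<xi>) (at \<xi>) \<and>
      g2 \<xi> + (real N - 1) / \<xi> * g1 \<xi> + alpha_par m \<sigma> p * f \<xi>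
        + beta_par m \<sigma> p * \<xi> * df \<xi> - \<xi> powr \<sigma> * f \<xi> powr p = 0)"

text \<open>(x,y,z) as functions of xi; the (S2) time variable is eta = ln xi.\<close>
definition xyz_of :: "real \<Rightarrow> real \<Rightarrow> real \<Rightarrow> (real \<Rightarrow> real) \<Rightarrow> real \<Rightarrow> real^3" where
  "xyz_of m \<sigma> p f \<xi> = vector
     [alpha_par m \<sigma> p / m * \<xi>^2 * f \<xi> powr (1 - m),
      \<xi> * deriv f \<xi> / f \<xi>,
      1 / m * \<xi> powr (\<sigma> + 2) * f \<xi> powr (p - m)]"

definition profile_traj_from :: "real \<Rightarrow> real \<Rightarrow> real \<Rightarrow> (real \<Rightarrow> real) \<Rightarrow> real^3 \<Rightarrow> bool" where
  "profile_traj_from m \<sigma> p f Q \<longleftrightarrow> ((\<lambda>\<eta>. xyz_of m \<sigma> p f (exp \<eta>)) \<longlongrightarrow> Q) at_bot"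

definition Q2 :: "real \<Rightarrow> nat \<Rightarrow> real^3" where
  "Q2 m N = vector [0, - (real N - 2) / m, 0]"

definition Z0 :: "real \<Rightarrow> nat \<Rightarrow> real \<Rightarrow> real \<Rightarrow> real" where
  "Z0 m N \<sigma> p = (\<sigma> + 2) * (m * (real N + \<sigma>) - p * (real N - 2)) / (p - m)^2"

definition Q3 :: "real \<Rightarrow> nat \<Rightarrow> real \<Rightarrow> real \<Rightarrow> real^3" where
  "Q3 m N \<sigma> p = vector [0, - (\<sigma> + 2) / (p - m), Z0 m N \<sigma> p]"

end

theory Submission
  imports Defs
begin

(* At Q2 and Q3 the x-direction of the Jacobian decouples, so its characteristic polynomial is
   (X - (2 - (m-1) y)) times that of the 2x2 block in (y,z): at Q2 this block is triangular with
   eigenvalues N-2 and (m(N+sigma) - p(N-2))/m, at Q3 its determinant -(p-m) Z0 is negative.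
   Since x' and z' are multiples of x and z, a trajectory tending to a point of a coordinate
   plane along which the multiplier has the wrong sign must lie in that plane (Gronwall).

   A profile gives a trajectory eta = ln xi of (S2). Near Q3, z = xi^(sigma+2) f^(p-m) / m tends
   to Z0, which is the claimed asymptotics. Near Q2 above the critical exponent z would decrease
   as xi increases from 0, contradicting z -> 0; below it x and z vanish like powers of xi, so
   w = y + (N-2)/m solves xi w' = (N - 2 - m w) w + O(xi^mu) with a repelling linear part and
   decays like a power of xi. Integrating xi f'/f = y then shows that f(xi) xi^((N-2)/m)
   converges to a positive limit. *)

lemma charpoly_3_first_row_diagonal:
  fixes M :: "real^3^3"
  assumes "M$1$2 = 0" "M$1$3 = 0"
    and "r1 + r2 = M$2$2 + M$3$3" "r1 * r2 = M$2$2 * M$3$3 - M$2$3 * M$3$2"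
  shows "charpoly M = [:- M$1$1, 1:] * [:- r1, 1:] * [:- r2, 1:]"
proof -
  have "charpoly M = [:- M$1$1, 1:] * ([:- M$2$2, 1:] * [:- M$3$3, 1:] - [:- M$2$3:] * [:- M$3$2:])"
    unfolding charpoly_def det_3 using assms(1,2) by (simp add: algebra_simps)
  also have "[:- M$2$2, 1:] * [:- M$3$3, 1:] - [:- M$2$3:] * [:- M$3$2:] = [:- r1, 1:] * [:- r2, 1:]"
    using assms(3,4) by (simp add: algebra_simps)
  finally show ?thesis by (simp only: mult.assoc)
qed

lemma opposite_sign_roots:
  fixes a b :: real
  assumes "b > 0"
  obtains r1 r2 where "r1 > 0" "r2 < 0" "r1 + r2 = a" "r1 * r2 = - b"
proof
  define s where "s = sqrt (a^2 + 4 * b)"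
  have "sqrt (a^2) < s" unfolding s_def using assms by (intro real_sqrt_less_mono) simp
  then show "(a + s) / 2 > 0" "(a - s) / 2 < 0" by auto
  show "(a + s) / 2 + (a - s) / 2 = a" by (simp add: field_simps)
  have "s^2 = a^2 + 4 * b" unfolding s_def using assms by (simp add: add_nonneg_pos)
  then show "(a + s) / 2 * ((a - s) / 2) = - b" by (simp add: power2_eq_square algebra_simps)
qed

lemma map_poly_of_real_linear_factor:
  "map_poly (of_real :: real \<Rightarrow> complex) ([:- a, 1:] * q) = [:- of_real a, 1:] * map_poly of_real q"
  by (auto simp: poly_eq_iff coeff_map_poly mult_pCons_left coeff_pCons split: nat.split)

lemma order_linear_factor: "order (c::complex) [:- a, 1:] = (if c = a then 1 else 0)"
  using order_power_n_n[of a 1] by (auto intro: order_0I)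

lemma spectrum_of_split_charpoly:
  fixes M :: "real^'n^'n"
  assumes "charpoly M = [:- a, 1:] * [:- b, 1:] * [:- c, 1:]"
  shows "eigenvalues M = complex_of_real ` {a, b, c}"
    and "unstable_dim M = of_bool (a > 0) + of_bool (b > 0) + of_bool (c > 0)"
    and "stable_dim M = of_bool (a < 0) + of_bool (b < 0) + of_bool (c < 0)"
proof -
  define A B C where "A = complex_of_real a" "B = complex_of_real b" "C = complex_of_real c"
  have "ccharpoly M = map_poly of_real ([:- a, 1:] * ([:- b, 1:] * ([:- c, 1:] * 1)))"
    unfolding ccharpoly_def assms by (simp only: mult.assoc mult_1_right)
  then have ccharpoly: "ccharpoly M = [:- A, 1:] * ([:- B, 1:] * [:- C, 1:])"
    unfolding A_B_C_def map_poly_of_real_linear_factor by simp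
  show eigenvalues: "eigenvalues M = complex_of_real ` {a, b, c}"
    unfolding eigenvalues_def ccharpoly poly_mult by (auto simp: A_B_C_def)
  have order: "order z (ccharpoly M) = of_bool (z = A) + of_bool (z = B) + of_bool (z = C)" for z
  proof -
    have nonzero: "[:- B, 1:] * [:- C, 1:] \<noteq> 0" "[:- A, 1:] * ([:- B, 1:] * [:- C, 1:]) \<noteq> 0"
      by (metis mult_eq_0_iff pCons_eq_0_iff one_neq_zero)+
    show ?thesis
      unfolding ccharpoly order_mult[OF nonzero(2)] order_mult[OF nonzero(1)] order_linear_factor
      by simp
  qed
  have count: "(\<Sum>z \<in> {z \<in> eigenvalues M. P z}. order z (ccharpoly M))
      = of_bool (P A) + of_bool (P B) + of_bool (P C)" for P
  proof -
    have "finite {z \<in> eigenvalues M. P z}" using eigenvalues by simp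
    then have "(\<Sum>z \<in> {z \<in> eigenvalues M. P z}. order z (ccharpoly M))
        = of_bool (A \<in> {z \<in> eigenvalues M. P z}) + of_bool (B \<in> {z \<in> eigenvalues M. P z})
          + of_bool (C \<in> {z \<in> eigenvalues M. P z})"
      by (simp add: order sum.distrib of_bool_def sum.delta)
    then show ?thesis using eigenvalues by (simp add: A_B_C_def)
  qed
  show "unstable_dim M = of_bool (a > 0) + of_bool (b > 0) + of_bool (c > 0)"
    unfolding unstable_dim_def count by (simp add: A_B_C_def)
  show "stable_dim M = of_bool (a < 0) + of_bool (b < 0) + of_bool (c < 0)"
    unfolding stable_dim_def count by (simp add: A_B_C_def)
qed

section \<open>Invariant coordinate planes\<close>

lemma has_real_derivative_at_of_within_atLeast:
  assumes "(f has_real_derivative D) (at t within {a..})" and "a < t"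
  shows "(f has_real_derivative D) (at t)"
  using assms at_within_interior[of t "{a..}"] interior_Ici[of "a - 1" a] by simp

lemma has_vector_derivative_vec_nth:
  assumes "(u has_vector_derivative D) F"
  shows "((\<lambda>t. u t $ i) has_real_derivative D $ i) F"
proof -
  have "((\<lambda>t. u t $ i) has_derivative (\<lambda>h. (h *\<^sub>R D) $ i)) F"
    using bounded_linear.has_derivative[OF bounded_linear_vec_nth assms[unfolded has_vector_derivative_def]] .
  moreover have "(\<lambda>h. (h *\<^sub>R D) $ i) = (*) (D $ i)" by (simp add: fun_eq_iff)
  ultimately show ?thesis by (simp add: has_field_derivative_def)
qed

lemma has_vector_derivative_componentwise:
  fixes u :: "real \<Rightarrow> real^'n"
  assumes "\<And>i. ((\<lambda>t. u t $ i) has_real_derivative D $ i) (at t within S)"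
  shows "(u has_vector_derivative D) (at t within S)"
  unfolding has_vector_derivative_def
proof (rule has_derivative_componentwise_within[THEN iffD2], intro ballI)
  fix b :: "real^'n" assume "b \<in> Basis"
  then obtain i where b: "b = axis i 1" by (auto simp: Basis_vec_def)
  have "(\<lambda>h. h * D $ i) = (*) (D $ i)" by (simp add: fun_eq_iff)
  then have "((\<lambda>t. u t $ i) has_derivative (\<lambda>h. h * D $ i)) (at t within S)"
    using assms[of i] by (simp add: has_field_derivative_def)
  then show "((\<lambda>x. u x \<bullet> b) has_derivative (\<lambda>h. (h *\<^sub>R D) \<bullet> b)) (at t within S)"
    by (simp add: b inner_axis)
qed

lemma vanishing_endpoint_linear_ode:
  fixes w g :: "real \<Rightarrow> real"
  assumes "0 \<le> T" and nonneg: "\<And>t. t \<in> {0..T} \<Longrightarrow> w t \<ge> 0"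
    and deriv: "\<And>t. t \<in> {0..T} \<Longrightarrow> (w has_real_derivative g t * w t) (at t within {0..})"
    and "continuous_on {0..T} g" and "w T = 0"
  shows "w 0 = 0"
proof -
  obtain s where "s \<in> {0..T}" and s_min: "\<And>t. t \<in> {0..T} \<Longrightarrow> g s \<le> g t"
    using continuous_attains_inf[of "{0..T}" g] \<open>0 \<le> T\<close> \<open>continuous_on {0..T} g\<close> by auto
  define K where "K = \<bar>g s\<bar>"
  \<comment> \<open>Gronwall: since g + K \<ge> 0, the function w e^(K t) is nondecreasing\<close>
  define \<phi> where "\<phi> t = w t * exp (K * t)" for t
  have \<phi>_deriv: "(\<phi> has_real_derivative (g t + K) * w t * exp (K * t)) (at t)" if "0 < t" "t < T" for t
  proof -
    have "(w has_real_derivative g t * w t) (at t)"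
      using that by (intro has_real_derivative_at_of_within_atLeast[OF deriv]) auto
    then show ?thesis
      unfolding \<phi>_def by (intro derivative_eq_intros refl) (auto simp: algebra_simps)
  qed
  moreover have "(g t + K) * w t * exp (K * t) \<ge> 0" if "0 < t" "t < T" for t
    using s_min[of t] nonneg[of t] that by (auto simp: K_def)
  moreover have "continuous_on {0..T} \<phi>"
  proof -
    have "continuous (at t within {0..T}) w" if "t \<in> {0..T}" for t
      using DERIV_continuous[OF deriv[OF that]] by (rule continuous_within_subset) auto
    then show ?thesis
      unfolding \<phi>_def by (intro continuous_intros) (simp add: continuous_on_eq_continuous_within)
  qed
  ultimately have "\<phi> 0 \<le> \<phi> T"
    by (intro DERIV_nonneg_imp_increasing_open[OF \<open>0 \<le> T\<close>]) blast+
  then show ?thesis using \<open>w T = 0\<close> nonneg[of 0] \<open>0 \<le> T\<close> by (simp add: \<phi>_def)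
qed

lemma vanishing_of_linear_ode_tendsto_zero:
  fixes w g :: "real \<Rightarrow> real"
  assumes nonneg: "\<And>t. t \<ge> 0 \<Longrightarrow> w t \<ge> 0"
    and deriv: "\<And>t. t \<ge> 0 \<Longrightarrow> (w has_real_derivative g t * w t) (at t within {0..})"
    and "continuous_on {0..} g" and "eventually (\<lambda>t. g t > 0) at_top" and "(w \<longlongrightarrow> 0) at_top"
  shows "w 0 = 0"
proof -
  obtain T where "T \<ge> 0" and g_pos: "\<And>t. t \<ge> T \<Longrightarrow> g t > 0"
    using \<open>eventually (\<lambda>t. g t > 0) at_top\<close> unfolding eventually_at_top_linorder
    by (metis max.cobounded1 max.cobounded2 order.trans)
  have "continuous (at t within {0..}) w" if "t \<ge> 0" for t
    using DERIV_continuous[OF deriv[OF that]] .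
  then have w_cont: "continuous_on {0..} w"
    by (simp add: continuous_on_eq_continuous_within)
  have w_mono: "w T \<le> w s" if "T \<le> s" for s
  proof (rule DERIV_nonneg_imp_increasing_open[OF that])
    fix t assume "T < t" "t < s"
    then show "\<exists>D. (w has_real_derivative D) (at t) \<and> D \<ge> 0"
      using \<open>T \<ge> 0\<close> g_pos[of t] nonneg[of t] deriv[of t]
      by (intro exI[of _ "g t * w t"]) (auto intro: has_real_derivative_at_of_within_atLeast)
  next
    show "continuous_on {T..s} w"
      by (rule continuous_on_subset[OF w_cont]) (use \<open>T \<ge> 0\<close> in auto)
  qed
  have "w T \<le> 0"
    using \<open>(w \<longlongrightarrow> 0) at_top\<close>
    by (rule tendsto_lowerbound) (auto simp: eventually_at_top_linorder intro!: exI[of _ T] w_mono)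
  then have "w T = 0" using nonneg[OF \<open>T \<ge> 0\<close>] by simp
  then show "w 0 = 0"
    using \<open>T \<ge> 0\<close> nonneg deriv \<open>continuous_on {0..} g\<close>
    by (intro vanishing_endpoint_linear_ode[of T w g]) (auto intro: continuous_on_subset)
qed

lemma stable_manifold_subset_coordinate_plane:
  fixes F :: "real^'n \<Rightarrow> real^'n" and a :: "real^'n \<Rightarrow> real"
  assumes F: "\<And>v. F v $ i = v $ i * a v" and "continuous_on UNIV a"
    and "Q $ i = 0" and "a Q > 0"
  shows "stable_manifold F Q \<subseteq> {v. v $ i = 0}"
proof
  fix v assume "v \<in> stable_manifold F Q"
  then obtain u where "u 0 = v" and "(u \<longlongrightarrow> Q) at_top"
    and u_deriv: "\<And>t. t \<in> {0..} \<Longrightarrow> (u has_vector_derivative F (u t)) (at t within {0..})"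
    unfolding stable_manifold_def by blast
  define w g where "w t = (u t $ i)^2" and "g t = 2 * a (u t)" for t
  have "w 0 = 0"
  proof (rule vanishing_of_linear_ode_tendsto_zero)
    show "(w has_real_derivative g t * w t) (at t within {0..})" if "t \<ge> 0" for t
      using has_vector_derivative_vec_nth[OF u_deriv, of t i] that
      unfolding w_def g_def F by (auto intro!: derivative_eq_intros simp: power2_eq_square)
    have "continuous_on {0..} u"
      unfolding continuous_on_eq_continuous_within using u_deriv has_vector_derivative_continuous by blast
    then show "continuous_on {0..} g"
      unfolding g_def
      by (intro continuous_on_mult_left continuous_on_compose2[OF \<open>continuous_on UNIV a\<close>]) auto
    have "(g \<longlongrightarrow> 2 * a Q) at_top"
      unfolding g_def using \<open>continuous_on UNIV a\<close> \<open>(u \<longlongrightarrow> Q) at_top\<close>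
      by (intro tendsto_intros isCont_tendsto_compose[of Q a]) (simp add: continuous_on_eq_continuous_at)
    then show "eventually (\<lambda>t. g t > 0) at_top"
      by (rule order_tendstoD(1)) (use \<open>a Q > 0\<close> in simp)
    have "(w \<longlongrightarrow> (Q $ i)^2) at_top"
      unfolding w_def by (intro tendsto_intros \<open>(u \<longlongrightarrow> Q) at_top\<close>)
    then show "(w \<longlongrightarrow> 0) at_top" using \<open>Q $ i = 0\<close> by simp
  qed (simp add: w_def)
  then show "v \<in> {v. v $ i = 0}" using \<open>u 0 = v\<close> by (simp add: w_def)
qed

lemma unstable_manifold_subset_reversed_stable_manifold:
  "unstable_manifold F Q \<subseteq> stable_manifold (\<lambda>v. - F v) Q"
proof
  fix v assume "v \<in> unstable_manifold F Q"
  then obtain u where "u 0 = v" and "(u \<longlongrightarrow> Q) at_bot"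
    and u_deriv: "\<And>t. t \<in> {..0} \<Longrightarrow> (u has_vector_derivative F (u t)) (at t within {..0})"
    unfolding unstable_manifold_def by blast
  have "((u \<circ> uminus) has_vector_derivative - F (u (- t))) (at t within {0..})" if "t \<ge> 0" for t
  proof -
    have "(uminus has_vector_derivative - 1) (at t within {0..})"
      by (intro derivative_eq_intros) auto
    then show ?thesis
      using vector_diff_chain_within[of uminus "- 1" t "{0..}" u] u_deriv[of "- t"] that by simp
  qed
  moreover have "((u \<circ> uminus) \<longlongrightarrow> Q) at_top"
    unfolding comp_def using \<open>(u \<longlongrightarrow> Q) at_bot\<close> filterlim_uminus_at_bot_at_top by (rule filterlim_compose)
  ultimately show "v \<in> stable_manifold (\<lambda>v. - F v) Q"
    unfolding stable_manifold_def using \<open>u 0 = v\<close> by (intro CollectI exI[of _ "u \<circ> uminus"]) auto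
qed

lemma unstable_manifold_subset_coordinate_plane:
  fixes F :: "real^'n \<Rightarrow> real^'n" and a :: "real^'n \<Rightarrow> real"
  assumes "\<And>v. F v $ i = v $ i * a v" and "continuous_on UNIV a"
    and "Q $ i = 0" and "a Q < 0"
  shows "unstable_manifold F Q \<subseteq> {v. v $ i = 0}"
proof -
  have "stable_manifold (\<lambda>v. - F v) Q \<subseteq> {v. v $ i = 0}"
    using assms by (intro stable_manifold_subset_coordinate_plane[where a = "\<lambda>v. - a v"])
      (auto intro: continuous_intros)
  then show ?thesis using unstable_manifold_subset_reversed_stable_manifold by blast
qed

section \<open>Euler-type differential inequalities at 0\<close>

lemma has_real_derivative_powr_div:
  "x > 0 \<Longrightarrow> ((\<lambda>t. t powr r) has_real_derivative r * x powr r / x) (at x)"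
  using has_real_derivative_powr[of x r] by (simp add: powr_diff)

lemma le_powr_of_euler_derivative_ge:
  fixes h h' :: "real \<Rightarrow> real"
  assumes "b > 0"
    and deriv: "\<And>x. x \<in> {0<..b} \<Longrightarrow> (h has_real_derivative h' x) (at x)"
    and euler: "\<And>x. x \<in> {0<..b} \<Longrightarrow> x * h' x \<ge> \<nu> * h x"
    and "x \<in> {0<..b}"
  shows "h x \<le> h b * b powr (- \<nu>) * x powr \<nu>"
proof -
  define G where "G t = h t * t powr (- \<nu>)" for t
  have "G x \<le> G b"
  proof (rule DERIV_nonneg_imp_nondecreasing[of x b G])
    fix t assume "x \<le> t" "t \<le> b"
    then have t: "t > 0" "t \<in> {0<..b}" using \<open>x \<in> {0<..b}\<close> by auto
    have "(G has_real_derivative h' t * t powr (- \<nu>) + (- \<nu> * t powr (- \<nu>) / t) * h t) (at t)"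
      unfolding G_def by (rule DERIV_mult[OF deriv[OF t(2)] has_real_derivative_powr_div[OF t(1)]])
    moreover have "h' t * t powr (- \<nu>) + (- \<nu> * t powr (- \<nu>) / t) * h t
        = (t * h' t - \<nu> * h t) * (t powr (- \<nu>) / t)"
      using t by (simp add: field_simps)
    moreover have "(t * h' t - \<nu> * h t) * (t powr (- \<nu>) / t) \<ge> 0"
      using euler[OF t(2)] t by simp
    ultimately show "\<exists>y. (G has_real_derivative y) (at t) \<and> 0 \<le> y" by auto
  qed (use \<open>x \<in> {0<..b}\<close> in simp)
  then have "h x * x powr (- \<nu>) * x powr \<nu> \<le> h b * b powr (- \<nu>) * x powr \<nu>"
    unfolding G_def by (rule mult_right_mono) simp
  then show ?thesis using \<open>x \<in> {0<..b}\<close> by (simp add: powr_minus field_simps)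
qed

lemma le_powr_of_growth_rate:
  fixes u u' r :: "real \<Rightarrow> real"
  assumes "0 < b" and "b \<le> 1" and "\<mu> \<le> \<nu>"
    and deriv: "\<And>x. x \<in> {0<..b} \<Longrightarrow> (u has_real_derivative u' x) (at x)"
    and euler: "\<And>x. x \<in> {0<..b} \<Longrightarrow> x * u' x = u x * r x"
    and rate: "\<And>x. x \<in> {0<..b} \<Longrightarrow> r x \<ge> \<nu>"
    and pos: "\<And>x. x \<in> {0<..b} \<Longrightarrow> u x > 0"
    and "x \<in> {0<..b}"
  shows "u x \<le> u b * b powr (- \<nu>) * x powr \<mu>"
proof -
  have "u x \<le> u b * b powr (- \<nu>) * x powr \<nu>"
  proof (rule le_powr_of_euler_derivative_ge[OF \<open>0 < b\<close> deriv _ \<open>x \<in> {0<..b}\<close>])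
    fix t assume "t \<in> {0<..b}"
    then show "\<nu> * u t \<le> t * u' t"
      unfolding euler[OF \<open>t \<in> {0<..b}\<close>] using rate pos
      by (simp add: mult.commute mult_right_mono less_imp_le)
  qed
  also have "\<dots> \<le> u b * b powr (- \<nu>) * x powr \<mu>"
    using \<open>x \<in> {0<..b}\<close> \<open>b \<le> 1\<close> \<open>\<mu> \<le> \<nu>\<close> pos[of b] \<open>0 < b\<close>
    by (intro mult_left_mono powr_mono') auto
  finally show ?thesis .
qed

lemma convergent_at_right_0_of_euler_derivative_bound:
  fixes \<phi> \<phi>' :: "real \<Rightarrow> real"
  assumes "b > 0" and "\<delta> > 0"
    and deriv: "\<And>x. x \<in> {0<..b} \<Longrightarrow> (\<phi> has_real_derivative \<phi>' x) (at x)"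
    and bound: "\<And>x. x \<in> {0<..b} \<Longrightarrow> \<bar>x * \<phi>' x\<bar> \<le> K * x powr \<delta>"
  shows "\<exists>L. (\<phi> \<longlongrightarrow> L) (at_right 0)"
proof -
  \<comment> \<open>adding and subtracting a primitive of the bound gives a monotone pair\<close>
  define inc dec where "inc x = \<phi> x + K / \<delta> * x powr \<delta>" and "dec x = \<phi> x - K / \<delta> * x powr \<delta>" for x
  have "0 \<le> K * b powr \<delta>"
    using bound[of b] \<open>b > 0\<close> abs_ge_zero order_trans by fastforce
  then have "K \<ge> 0" using \<open>b > 0\<close> by (simp add: zero_le_mult_iff)
  have inc_deriv: "(inc has_real_derivative \<phi>' x + K * x powr \<delta> / x) (at x)"
    and dec_deriv: "(dec has_real_derivative \<phi>' x - K * x powr \<delta> / x) (at x)"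
    and inc_sign: "\<phi>' x + K * x powr \<delta> / x \<ge> 0" and dec_sign: "\<phi>' x - K * x powr \<delta> / x \<le> 0"
    if "x \<in> {0<..b}" for x
  proof -
    have primitive: "K / \<delta> * (\<delta> * x powr \<delta> / x) = K * x powr \<delta> / x" using \<open>\<delta> > 0\<close> by simp
    have "(inc has_real_derivative \<phi>' x + K / \<delta> * (\<delta> * x powr \<delta> / x)) (at x)"
      "(dec has_real_derivative \<phi>' x - K / \<delta> * (\<delta> * x powr \<delta> / x)) (at x)"
      unfolding inc_def dec_def using that
      by (intro DERIV_add DERIV_diff deriv DERIV_cmult has_real_derivative_powr_div; simp)+
    then show "(inc has_real_derivative \<phi>' x + K * x powr \<delta> / x) (at x)"
      "(dec has_real_derivative \<phi>' x - K * x powr \<delta> / x) (at x)" unfolding primitive .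
    have "\<bar>\<phi>' x\<bar> \<le> K * x powr \<delta> / x"
      using bound[OF that] that by (simp add: abs_mult pos_le_divide_eq mult.commute)
    then show "\<phi>' x + K * x powr \<delta> / x \<ge> 0" "\<phi>' x - K * x powr \<delta> / x \<le> 0" by linarith+
  qed
  have inc_mono: "inc x \<le> inc y" if "x \<in> {0<..b}" "y \<in> {0<..b}" "x \<le> y" for x y
    using that by (intro DERIV_nonneg_imp_nondecreasing[of x y inc]) (auto intro!: exI inc_deriv inc_sign)
  have inc_bound: "dec b \<le> inc x" if "x \<in> {0<..b}" for x
  proof -
    have "dec b \<le> dec x"
      using that by (intro DERIV_nonpos_imp_nonincreasing[of x b dec]) (auto intro!: exI dec_deriv dec_sign)
    also have "dec x \<le> inc x"
      using \<open>K \<ge> 0\<close> \<open>\<delta> > 0\<close> by (simp add: inc_def dec_def)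
    finally show ?thesis .
  qed
  have "{0<..} \<inter> {0<..b} = {0<..b}" by auto
  moreover have "at 0 within {0<..b} = at_right (0::real)"
    using \<open>b > 0\<close> by (intro at_within_nhd[of 0 "{..<b}"]) auto
  ultimately have "(inc \<longlongrightarrow> Inf (inc ` {0<..b})) (at_right 0)"
    using Lim_right_bound[of "{0<..b}" 0 inc "dec b"] inc_mono inc_bound by auto
  then have "((\<lambda>x. inc x - K / \<delta> * x powr \<delta>) \<longlongrightarrow> Inf (inc ` {0<..b}) - K / \<delta> * 0 powr \<delta>) (at_right 0)"
    using \<open>\<delta> > 0\<close> eventually_mono[OF eventually_at_right_less less_imp_le]
    by (intro tendsto_intros) auto
  then show ?thesis unfolding inc_def using \<open>\<delta> > 0\<close> by auto
qed

lemma powr_decay_of_perturbed_euler_repeller: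
  fixes w w' c E :: "real \<Rightarrow> real"
  assumes "b > 0" and "a > 0" and "\<mu> > 0"
    and deriv: "\<And>x. x \<in> {0<..b} \<Longrightarrow> (w has_real_derivative w' x) (at x)"
    and euler: "\<And>x. x \<in> {0<..b} \<Longrightarrow> x * w' x = c x * w x + E x"
    and repel: "\<And>x. x \<in> {0<..b} \<Longrightarrow> c x \<ge> a"
    and perturb: "\<And>x. x \<in> {0<..b} \<Longrightarrow> \<bar>E x\<bar> \<le> K * x powr \<mu>"
  shows "\<exists>C \<delta>. \<delta> > 0 \<and> (\<forall>x \<in> {0<..b}. \<bar>w x\<bar> \<le> C * x powr \<delta>)"
proof -
  define \<nu> where "\<nu> = min a \<mu>"
  define D where "D = K^2 / (a * (2 * \<mu> - \<nu>))"
  have "\<nu> > 0" "2 * \<mu> - \<nu> > 0" using \<open>a > 0\<close> \<open>\<mu> > 0\<close> by (auto simp: \<nu>_def)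
  then have "D \<ge> 0" and D: "2 * \<mu> * D - K^2 / a = \<nu> * D"
    using \<open>a > 0\<close> by (auto simp: D_def field_simps)
  \<comment> \<open>Lyapunov function: D is chosen so that its second term absorbs the perturbation\<close>
  define h h' where "h x = (w x)^2 + D * x powr (2 * \<mu>)"
    and "h' x = 2 * w x * w' x + D * (2 * \<mu> * x powr (2 * \<mu>) / x)" for x
  have h_deriv: "(h has_real_derivative h' x) (at x)" if "x \<in> {0<..b}" for x
    unfolding h_def h'_def using that
    by (intro DERIV_add DERIV_cmult has_real_derivative_powr_div)
      (auto intro!: derivative_eq_intros deriv)
  have h_euler: "x * h' x \<ge> \<nu> * h x" if x: "x \<in> {0<..b}" for x
  proof -
    have "(E x)^2 \<le> (K * x powr \<mu>)^2"
      using perturb[OF x] by (metis abs_ge_zero power2_abs power_mono)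
    also have "\<dots> = K^2 * x powr (2 * \<mu>)"
      using x by (simp add: power_mult_distrib power2_eq_square powr_add[symmetric])
    finally have E: "(E x)^2 / a \<le> K^2 * x powr (2 * \<mu>) / a"
      using \<open>a > 0\<close> by (simp add: divide_right_mono)
    have "0 \<le> a * (w x + E x / a)^2" using \<open>a > 0\<close> by simp
    also have "\<dots> = a * (w x)^2 + 2 * w x * E x + (E x)^2 / a"
      using \<open>a > 0\<close> by (simp add: power2_eq_square algebra_simps add_divide_distrib)
    finally have cross: "2 * w x * E x \<ge> - (a * (w x)^2 + (E x)^2 / a)" by linarith
    have "x * h' x = 2 * w x * (x * w' x) + 2 * \<mu> * D * x powr (2 * \<mu>)"
      using x by (simp add: h'_def distrib_left)
    also have "\<dots> = 2 * c x * (w x)^2 + 2 * w x * E x + 2 * \<mu> * D * x powr (2 * \<mu>)"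
      unfolding euler[OF x] by (simp add: algebra_simps power2_eq_square)
    also have "\<dots> \<ge> a * (w x)^2 + (2 * \<mu> * D - K^2 / a) * x powr (2 * \<mu>)"
      using mult_right_mono[OF repel[OF x] zero_le_power2[of "w x"]] cross E
      by (simp add: left_diff_distrib)
    finally have "x * h' x \<ge> a * (w x)^2 + (2 * \<mu> * D - K^2 / a) * x powr (2 * \<mu>)" .
    moreover have "a * (w x)^2 \<ge> \<nu> * (w x)^2"
      by (intro mult_right_mono) (auto simp: \<nu>_def)
    ultimately show ?thesis unfolding D by (simp add: h_def algebra_simps)
  qed
  define C where "C = sqrt (h b * b powr (- \<nu>))"
  have "\<bar>w x\<bar> \<le> C * x powr (\<nu> / 2)" if x: "x \<in> {0<..b}" for x
  proof -
    have "(w x)^2 \<le> h x" using \<open>D \<ge> 0\<close> by (simp add: h_def)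
    also have "\<dots> \<le> h b * b powr (- \<nu>) * x powr \<nu>"
      by (rule le_powr_of_euler_derivative_ge[OF \<open>b > 0\<close> h_deriv h_euler x])
    finally have "sqrt ((w x)^2) \<le> sqrt (h b * b powr (- \<nu>) * x powr \<nu>)"
      by (rule real_sqrt_le_mono)
    then show ?thesis
      using x by (simp add: C_def real_sqrt_mult powr_half_sqrt_powr)
  qed
  then show ?thesis using \<open>\<nu> > 0\<close> by (intro exI[of _ C] exI[of _ "\<nu> / 2"]) auto
qed

lemma eventually_at_right_0E:
  assumes "eventually P (at_right (0::real))" and "R > 0"
  obtains b where "0 < b" "b < R" "b \<le> 1" "\<And>\<xi>. \<xi> \<in> {0<..b} \<Longrightarrow> P \<xi>"
proof -
  obtain b0 where "b0 > 0" and b0: "\<And>\<xi>. 0 < \<xi> \<Longrightarrow> \<xi> < b0 \<Longrightarrow> P \<xi>"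
    using assms(1) unfolding eventually_at_right_field by auto
  show ?thesis
    using \<open>b0 > 0\<close> \<open>R > 0\<close> b0 by (intro that[of "min (b0 / 2) (min (R / 2) 1)"]) auto
qed

section \<open>Linearisation of (S2) at Q2 and Q3\<close>

definition S2_jacobian :: "real \<Rightarrow> nat \<Rightarrow> real \<Rightarrow> real \<Rightarrow> real^3 \<Rightarrow> real^3^3" where
  "S2_jacobian m N \<sigma> p v = (let x = v$1; y = v$2; z = v$3 in
     vector [vector [2 - (m - 1) * y, - (m - 1) * x, 0],
             vector [- 1 - (p - m) / (\<sigma> + 2) * y, - (real N - 2) - 2 * m * y - (p - m) / (\<sigma> + 2) * x, 1],
             vector [0, (p - m) * z, \<sigma> + 2 + (p - m) * y]])"

lemma S2_components:
  "S2 m N \<sigma> p v $ 1 = v$1 * (2 - (m - 1) * v$2)"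
  "S2 m N \<sigma> p v $ 2 = - v$1 - (real N - 2) * v$2 + v$3 - m * (v$2)^2 - (p - m) / (\<sigma> + 2) * v$1 * v$2"
  "S2 m N \<sigma> p v $ 3 = v$3 * (\<sigma> + 2 + (p - m) * v$2)"
  by (simp_all add: S2_def Let_def)

lemma S2_jacobian_entries:
  "S2_jacobian m N \<sigma> p v $ 1 $ 1 = 2 - (m - 1) * v$2"
  "S2_jacobian m N \<sigma> p v $ 1 $ 2 = - (m - 1) * v$1"
  "S2_jacobian m N \<sigma> p v $ 1 $ 3 = 0"
  "S2_jacobian m N \<sigma> p v $ 2 $ 1 = - 1 - (p - m) / (\<sigma> + 2) * v$2"
  "S2_jacobian m N \<sigma> p v $ 2 $ 2 = - (real N - 2) - 2 * m * v$2 - (p - m) / (\<sigma> + 2) * v$1"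
  "S2_jacobian m N \<sigma> p v $ 2 $ 3 = 1"
  "S2_jacobian m N \<sigma> p v $ 3 $ 1 = 0"
  "S2_jacobian m N \<sigma> p v $ 3 $ 2 = (p - m) * v$3"
  "S2_jacobian m N \<sigma> p v $ 3 $ 3 = \<sigma> + 2 + (p - m) * v$2"
  by (simp_all add: S2_jacobian_def Let_def)

lemma S2_has_jacobian: "jacobian_is (S2 m N \<sigma> p) v (S2_jacobian m N \<sigma> p v)"
proof -
  have S2_basis: "S2 m N \<sigma> p = (\<lambda>v. (v$1 * (2 - (m - 1) * v$2)) *\<^sub>R axis 1 1
      + (- v$1 - (real N - 2) * v$2 + v$3 - m * (v$2)^2 - (p - m) / (\<sigma> + 2) * v$1 * v$2) *\<^sub>R axis 2 1
      + (v$3 * (\<sigma> + 2 + (p - m) * v$2)) *\<^sub>R axis 3 1)"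
    by (rule ext) (simp add: S2_def Let_def vec_eq_iff forall_3 axis_def)
  have nth: "((\<lambda>v::real^3. v$i) has_derivative (\<lambda>h. h$i)) (at v)" for i
    by (rule bounded_linear.has_derivative[OF bounded_linear_vec_nth has_derivative_ident])
  show ?thesis
    unfolding jacobian_is_def S2_basis
    by (rule has_derivative_eq_rhs, (rule derivative_eq_intros nth refl)+)
      (auto simp: S2_jacobian_def Let_def vec_eq_iff forall_3 axis_def matrix_vector_mult_def sum_3
        algebra_simps power2_eq_square)
qed

lemma Q2_components: "Q2 m N $ 1 = 0" "Q2 m N $ 2 = - (real N - 2) / m" "Q2 m N $ 3 = 0"
  by (simp_all add: Q2_def)

lemma Q3_components:
  "Q3 m N \<sigma> p $ 1 = 0" "Q3 m N \<sigma> p $ 2 = - (\<sigma> + 2) / (p - m)" "Q3 m N \<sigma> p $ 3 = Z0 m N \<sigma> p"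
  by (simp_all add: Q3_def)

lemma S2_critical_Q2: "m \<noteq> 0 \<Longrightarrow> critical_point (S2 m N \<sigma> p) (Q2 m N)"
  unfolding critical_point_def vec_eq_iff forall_3 S2_components Q2_components
  by (simp add: power2_eq_square field_simps)

lemma S2_critical_Q3:
  assumes "p \<noteq> m"
  shows "critical_point (S2 m N \<sigma> p) (Q3 m N \<sigma> p)"
proof -
  define d y where "d = p - m" and "y = - (\<sigma> + 2) / (p - m)"
  have "d \<noteq> 0" using assms by (simp add: d_def)
  have "Z0 m N \<sigma> p = (\<sigma> + 2) * (m * (\<sigma> + 2) - (real N - 2) * d) / d^2"
    unfolding Z0_def d_def by (simp add: algebra_simps)
  then have "- (real N - 2) * y + Z0 m N \<sigma> p - m * y^2 = 0"
    using \<open>d \<noteq> 0\<close> by (simp add: y_def d_def[symmetric] field_simps power2_eq_square)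
  moreover have "\<sigma> + 2 + (p - m) * y = 0" using assms by (simp add: y_def)
  ultimately show ?thesis
    unfolding critical_point_def vec_eq_iff forall_3 S2_components Q3_components y_def[symmetric]
    by (simp add: algebra_simps)
qed

lemma charpoly_S2_jacobian_Q2:
  assumes "m \<noteq> 0"
  shows "charpoly (S2_jacobian m N \<sigma> p (Q2 m N)) = [:- (2 - (m - 1) * Q2 m N $ 2), 1:]
    * [:- (real N - 2), 1:] * [:- (\<sigma> + 2 + (p - m) * Q2 m N $ 2), 1:]"
proof -
  let ?M = "S2_jacobian m N \<sigma> p (Q2 m N)"
  have "?M$1$2 = 0" "?M$1$3 = 0" "?M$3$2 = 0"
    by (simp_all add: S2_jacobian_entries Q2_components)
  then have "charpoly ?M = [:- ?M$1$1, 1:] * [:- ?M$2$2, 1:] * [:- ?M$3$3, 1:]"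
    by (intro charpoly_3_first_row_diagonal) simp_all
  moreover have "?M$2$2 = real N - 2"
    using assms by (simp add: S2_jacobian_entries Q2_components)
  ultimately show ?thesis by (simp only: S2_jacobian_entries(1,9))
qed

lemma charpoly_S2_jacobian_Q3:
  assumes "p > m" and "Z0 m N \<sigma> p > 0"
  obtains r1 r2 where "r1 > 0" "r2 < 0"
    "charpoly (S2_jacobian m N \<sigma> p (Q3 m N \<sigma> p))
      = [:- (2 - (m - 1) * Q3 m N \<sigma> p $ 2), 1:] * [:- r1, 1:] * [:- r2, 1:]"
proof -
  let ?M = "S2_jacobian m N \<sigma> p (Q3 m N \<sigma> p)"
  have entries: "?M$1$2 = 0" "?M$1$3 = 0" "?M$2$3 = 1" "?M$3$2 = (p - m) * Z0 m N \<sigma> p" "?M$3$3 = 0"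
    using assms(1) by (simp_all add: S2_jacobian_entries Q3_components)
  obtain r1 r2 where roots: "r1 > 0" "r2 < 0" "r1 + r2 = ?M$2$2" "r1 * r2 = - ((p - m) * Z0 m N \<sigma> p)"
    using opposite_sign_roots[of "(p - m) * Z0 m N \<sigma> p" "?M$2$2"] assms by auto
  have "charpoly ?M = [:- ?M$1$1, 1:] * [:- r1, 1:] * [:- r2, 1:]"
    by (rule charpoly_3_first_row_diagonal) (simp_all add: entries roots)
  with roots show ?thesis
    using that by (simp add: S2_jacobian_entries(1))
qed

lemma Q2_x_rate_pos:
  assumes "m > 1" and "N \<ge> 3"
  shows "2 - (m - 1) * Q2 m N $ 2 > 0"
proof -
  have "2 - (m - 1) * Q2 m N $ 2 = 2 + (m - 1) * (real N - 2) / m"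
    using assms by (simp add: Q2_components field_simps)
  moreover have "(m - 1) * (real N - 2) / m \<ge> 0" using assms by simp
  ultimately show ?thesis by linarith
qed

lemma Q2_z_rate_pos_iff:
  assumes "m > 0" and "N \<ge> 3"
  shows "\<sigma> + 2 + (p - m) * Q2 m N $ 2 > 0 \<longleftrightarrow> p < m * (real N + \<sigma>) / (real N - 2)"
  using assms by (simp add: Q2_components pos_less_divide_eq field_simps)

lemma Q2_z_rate_neg_iff:
  assumes "m > 0" and "N \<ge> 3"
  shows "\<sigma> + 2 + (p - m) * Q2 m N $ 2 < 0 \<longleftrightarrow> p > m * (real N + \<sigma>) / (real N - 2)"
  using assms by (simp add: Q2_components pos_divide_less_eq field_simps)

lemma Q3_x_rate_pos:
  assumes "m > 1" and "p > m" and "\<sigma> > 0"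
  shows "2 - (m - 1) * Q3 m N \<sigma> p $ 2 > 0"
proof -
  have "2 - (m - 1) * Q3 m N \<sigma> p $ 2 = 2 + (m - 1) * (\<sigma> + 2) / (p - m)"
    using assms by (simp add: Q3_components field_simps)
  moreover have "(m - 1) * (\<sigma> + 2) / (p - m) \<ge> 0" using assms by simp
  ultimately show ?thesis by linarith
qed

lemma Z0_pos:
  assumes "p > m" and "\<sigma> > 0" and "N \<ge> 3" and "p < m * (real N + \<sigma>) / (real N - 2)"
  shows "Z0 m N \<sigma> p > 0"
  using assms by (simp add: Z0_def pos_less_divide_eq)

lemma Q2_unstable_node:
  assumes "m > 1" and "N \<ge> 3" and "p < m * (real N + \<sigma>) / (real N - 2)"
  shows "unstable_node (S2 m N \<sigma> p) (Q2 m N)"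
proof -
  let ?M = "S2_jacobian m N \<sigma> p (Q2 m N)"
  define l1 l3 where "l1 = 2 - (m - 1) * Q2 m N $ 2" and "l3 = \<sigma> + 2 + (p - m) * Q2 m N $ 2"
  have "l1 > 0" "real N - 2 > 0" "l3 > 0"
    using assms Q2_x_rate_pos Q2_z_rate_pos_iff unfolding l1_def l3_def by auto
  moreover have charpoly: "charpoly ?M = [:- l1, 1:] * [:- (real N - 2), 1:] * [:- l3, 1:]"
    unfolding l1_def l3_def using \<open>m > 1\<close> by (intro charpoly_S2_jacobian_Q2) simp
  ultimately have "unstable_node_matrix ?M"
    unfolding unstable_node_matrix_def spectrum_of_split_charpoly(1)[OF charpoly] by auto
  then show ?thesis
    unfolding unstable_node_def
    using \<open>m > 1\<close> S2_critical_Q2[of m N \<sigma> p] S2_has_jacobian[of m N \<sigma> p "Q2 m N"] by auto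
qed

lemma Q2_saddle:
  assumes "m > 1" and "N \<ge> 3" and "p > m * (real N + \<sigma>) / (real N - 2)"
  shows "saddle_point (S2 m N \<sigma> p) (Q2 m N)
      \<and> unstable_manifold_dim (S2 m N \<sigma> p) (Q2 m N) 2
      \<and> stable_manifold_dim (S2 m N \<sigma> p) (Q2 m N) 1
      \<and> unstable_manifold (S2 m N \<sigma> p) (Q2 m N) \<subseteq> {v. v$3 = 0}
      \<and> stable_manifold (S2 m N \<sigma> p) (Q2 m N) \<subseteq> {v. v$1 = 0}"
proof -
  let ?M = "S2_jacobian m N \<sigma> p (Q2 m N)"
  define l1 l3 where "l1 = 2 - (m - 1) * Q2 m N $ 2" and "l3 = \<sigma> + 2 + (p - m) * Q2 m N $ 2"
  have "l1 > 0" "real N - 2 > 0" "l3 < 0"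
    using assms Q2_x_rate_pos Q2_z_rate_neg_iff unfolding l1_def l3_def by auto
  moreover have charpoly: "charpoly ?M = [:- l1, 1:] * [:- (real N - 2), 1:] * [:- l3, 1:]"
    unfolding l1_def l3_def using \<open>m > 1\<close> by (intro charpoly_S2_jacobian_Q2) simp
  ultimately have "saddle_matrix ?M" "unstable_dim ?M = 2" "stable_dim ?M = 1"
    unfolding saddle_matrix_def hyperbolic_def spectrum_of_split_charpoly[OF charpoly] by auto
  moreover have "unstable_manifold (S2 m N \<sigma> p) (Q2 m N) \<subseteq> {v. v$3 = 0}"
    using \<open>l3 < 0\<close> unfolding l3_def
    by (intro unstable_manifold_subset_coordinate_plane[OF S2_components(3)])
      (auto intro!: continuous_intros simp: Q2_components)
  moreover have "stable_manifold (S2 m N \<sigma> p) (Q2 m N) \<subseteq> {v. v$1 = 0}"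
    using \<open>l1 > 0\<close> unfolding l1_def
    by (intro stable_manifold_subset_coordinate_plane[OF S2_components(1)])
      (auto intro!: continuous_intros simp: Q2_components)
  ultimately show ?thesis
    unfolding saddle_point_def unstable_manifold_dim_def stable_manifold_dim_def
    using \<open>m > 1\<close> S2_critical_Q2[of m N \<sigma> p] S2_has_jacobian[of m N \<sigma> p "Q2 m N"] by auto
qed

lemma Q3_saddle:
  assumes "m > 1" and "\<sigma> > 0" and "p > m" and "N \<ge> 3"
    and "p < m * (real N + \<sigma>) / (real N - 2)"
  shows "saddle_point (S2 m N \<sigma> p) (Q3 m N \<sigma> p)
      \<and> unstable_manifold_dim (S2 m N \<sigma> p) (Q3 m N \<sigma> p) 2
      \<and> stable_manifold_dim (S2 m N \<sigma> p) (Q3 m N \<sigma> p) 1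
      \<and> stable_manifold (S2 m N \<sigma> p) (Q3 m N \<sigma> p) \<subseteq> {v. v$1 = 0}"
proof -
  let ?M = "S2_jacobian m N \<sigma> p (Q3 m N \<sigma> p)"
  define l1 where "l1 = 2 - (m - 1) * Q3 m N \<sigma> p $ 2"
  have "l1 > 0" using Q3_x_rate_pos assms unfolding l1_def by auto
  obtain r1 r2 where "r1 > 0" "r2 < 0" and charpoly: "charpoly ?M = [:- l1, 1:] * [:- r1, 1:] * [:- r2, 1:]"
    using charpoly_S2_jacobian_Q3[OF \<open>p > m\<close> Z0_pos] assms unfolding l1_def by blast
  with \<open>l1 > 0\<close> have "saddle_matrix ?M" "unstable_dim ?M = 2" "stable_dim ?M = 1"
    unfolding saddle_matrix_def hyperbolic_def spectrum_of_split_charpoly[OF charpoly] by auto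
  moreover have "stable_manifold (S2 m N \<sigma> p) (Q3 m N \<sigma> p) \<subseteq> {v. v$1 = 0}"
    using \<open>l1 > 0\<close> unfolding l1_def
    by (intro stable_manifold_subset_coordinate_plane[OF S2_components(1)])
      (auto intro!: continuous_intros simp: Q3_components)
  ultimately show ?thesis
    unfolding saddle_point_def unstable_manifold_dim_def stable_manifold_dim_def
    using \<open>p > m\<close> S2_critical_Q3[of p m N \<sigma>] S2_has_jacobian[of m N \<sigma> p "Q3 m N \<sigma> p"] by auto
qed

section \<open>Trajectories of (S2) leaving Q2\<close>

lemma S2_trajectory_component_derivative:
  assumes "(V has_vector_derivative (1 / \<xi>) *\<^sub>R S2 m N \<sigma> p (V \<xi>)) (at \<xi>)" and "\<xi> > 0"
  shows "((\<lambda>s. V s $ i) has_real_derivative S2 m N \<sigma> p (V \<xi>) $ i / \<xi>) (at \<xi>)"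
    and "\<xi> * (S2 m N \<sigma> p (V \<xi>) $ i / \<xi>) = S2 m N \<sigma> p (V \<xi>) $ i"
  using has_vector_derivative_vec_nth[OF assms(1), of i] assms(2) by simp_all

lemma S2_trajectory_not_from_Q2_above_critical:
  assumes "m > 0" and "N \<ge> 3" and "p > m * (real N + \<sigma>) / (real N - 2)" and "R > 0"
    and traj: "\<And>\<xi>. \<xi> \<in> {0<..<R} \<Longrightarrow> (V has_vector_derivative (1 / \<xi>) *\<^sub>R S2 m N \<sigma> p (V \<xi>)) (at \<xi>)"
    and z_pos: "\<And>\<xi>. \<xi> \<in> {0<..<R} \<Longrightarrow> V \<xi> $ 3 > 0"
    and lim: "(V \<longlongrightarrow> Q2 m N) (at_right 0)"
  shows False
proof -
  define rate where "rate \<xi> = \<sigma> + 2 + (p - m) * V \<xi> $ 2" for \<xi>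
  have "(rate \<longlongrightarrow> \<sigma> + 2 + (p - m) * Q2 m N $ 2) (at_right 0)"
    unfolding rate_def by (intro tendsto_intros lim)
  moreover have "\<sigma> + 2 + (p - m) * Q2 m N $ 2 < 0" using Q2_z_rate_neg_iff assms(1-3) by blast
  ultimately have "eventually (\<lambda>\<xi>. rate \<xi> < 0) (at_right 0)" by (rule order_tendstoD(2))
  then obtain b where "0 < b" "b < R" and rate_neg: "\<And>\<xi>. \<xi> \<in> {0<..b} \<Longrightarrow> rate \<xi> < 0"
    using \<open>R > 0\<close> by (rule eventually_at_right_0E) blast
  \<comment> \<open>z decreases in \<xi> near 0, so it cannot tend to the z-coordinate 0 of Q2\<close>
  have "V b $ 3 \<le> V \<xi> $ 3" if "\<xi> \<in> {0<..b}" for \<xi>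
  proof (rule DERIV_nonpos_imp_nonincreasing[of \<xi> b "\<lambda>s. V s $ 3"])
    fix t assume "\<xi> \<le> t" "t \<le> b"
    then have t: "t \<in> {0<..<R}" "t \<in> {0<..b}" "t > 0" using that \<open>b < R\<close> by auto
    have "S2 m N \<sigma> p (V t) $ 3 / t \<le> 0"
      using rate_neg[OF t(2)] z_pos[OF t(1)] \<open>t > 0\<close>
      by (simp add: S2_components rate_def mult_nonneg_nonpos divide_nonpos_pos)
    then show "\<exists>y. ((\<lambda>s. V s $ 3) has_real_derivative y) (at t) \<and> y \<le> 0"
      using S2_trajectory_component_derivative(1)[OF traj[OF t(1)] \<open>t > 0\<close>] by blast
  qed (use that in simp)
  then have "V b $ 3 \<le> Q2 m N $ 3"
    using \<open>b > 0\<close> by (intro tendsto_lowerbound[OF tendsto_vec_nth[OF lim]])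
      (auto simp: eventually_at_right_field intro!: exI[of _ b])
  then show False using z_pos[of b] \<open>b > 0\<close> \<open>b < R\<close> by (simp add: Q2_components)
qed

lemma S2_trajectory_near_Q2:
  assumes "m > 1" and "N \<ge> 3" and "p < m * (real N + \<sigma>) / (real N - 2)" and "R > 0"
    and traj: "\<And>\<xi>. \<xi> \<in> {0<..<R} \<Longrightarrow> (V has_vector_derivative (1 / \<xi>) *\<^sub>R S2 m N \<sigma> p (V \<xi>)) (at \<xi>)"
    and pos: "\<And>\<xi>. \<xi> \<in> {0<..<R} \<Longrightarrow> V \<xi> $ 1 > 0 \<and> V \<xi> $ 3 > 0"
    and lim: "(V \<longlongrightarrow> Q2 m N) (at_right 0)"
  obtains b \<mu> K where "0 < b" "b < R" "b \<le> 1" "\<mu> > 0"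
    "\<And>\<xi>. \<xi> \<in> {0<..b} \<Longrightarrow> V \<xi> $ 1 \<le> K * \<xi> powr \<mu> \<and> V \<xi> $ 3 \<le> K * \<xi> powr \<mu>"
    "\<And>\<xi>. \<xi> \<in> {0<..b} \<Longrightarrow> \<bar>V \<xi> $ 2 + (real N - 2) / m\<bar> < (real N - 2) / (2 * m)"
proof -
  define n y where "n = real N - 2" and "y \<xi> = V \<xi> $ 2" for \<xi>
  define l1 l3 where "l1 = 2 - (m - 1) * Q2 m N $ 2" and "l3 = \<sigma> + 2 + (p - m) * Q2 m N $ 2"
  have "n > 0" "l1 > 0" "l3 > 0"
    using assms Q2_x_rate_pos Q2_z_rate_pos_iff by (auto simp: n_def l1_def l3_def)
  have y_lim: "(y \<longlongrightarrow> - n / m) (at_right 0)"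
    using tendsto_vec_nth[OF lim, of 2] by (simp add: y_def[abs_def] n_def Q2_components)
  have "eventually (\<lambda>\<xi>. 2 - (m - 1) * y \<xi> > l1 / 2 \<and> \<sigma> + 2 + (p - m) * y \<xi> > l3 / 2
      \<and> \<bar>y \<xi> + n / m\<bar> < n / (2 * m)) (at_right 0)"
  proof (intro eventually_conj)
    have lims: "((\<lambda>\<xi>. 2 - (m - 1) * y \<xi>) \<longlongrightarrow> l1) (at_right 0)"
      "((\<lambda>\<xi>. \<sigma> + 2 + (p - m) * y \<xi>) \<longlongrightarrow> l3) (at_right 0)"
      "((\<lambda>\<xi>. \<bar>y \<xi> + n / m\<bar>) \<longlongrightarrow> 0) (at_right 0)"
      unfolding l1_def l3_def using y_lim
      by (auto intro!: tendsto_eq_intros simp: Q2_components n_def add_divide_distrib[symmetric])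
    show "eventually (\<lambda>\<xi>. 2 - (m - 1) * y \<xi> > l1 / 2) (at_right 0)"
      by (rule order_tendstoD(1)[OF lims(1)]) (use \<open>l1 > 0\<close> in simp)
    show "eventually (\<lambda>\<xi>. \<sigma> + 2 + (p - m) * y \<xi> > l3 / 2) (at_right 0)"
      by (rule order_tendstoD(1)[OF lims(2)]) (use \<open>l3 > 0\<close> in simp)
    show "eventually (\<lambda>\<xi>. \<bar>y \<xi> + n / m\<bar> < n / (2 * m)) (at_right 0)"
      by (rule order_tendstoD(2)[OF lims(3)]) (use \<open>n > 0\<close> \<open>m > 1\<close> in simp)
  qed
  then obtain b where "0 < b" "b < R" "b \<le> 1"
    and near: "\<And>\<xi>. \<xi> \<in> {0<..b} \<Longrightarrow> 2 - (m - 1) * y \<xi> > l1 / 2 \<and> \<sigma> + 2 + (p - m) * y \<xi> > l3 / 2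
      \<and> \<bar>y \<xi> + n / m\<bar> < n / (2 * m)"
    using \<open>R > 0\<close> by (rule eventually_at_right_0E) blast
  have \<xi>R: "\<xi> \<in> {0<..<R}" and \<xi>_pos: "\<xi> > 0" if "\<xi> \<in> {0<..b}" for \<xi>
    using that \<open>b < R\<close> by auto
  have deriv: "((\<lambda>s. V s $ i) has_real_derivative S2 m N \<sigma> p (V \<xi>) $ i / \<xi>) (at \<xi>)"
    and euler: "\<xi> * (S2 m N \<sigma> p (V \<xi>) $ i / \<xi>) = S2 m N \<sigma> p (V \<xi>) $ i"
    if "\<xi> \<in> {0<..b}" for \<xi> i
    using S2_trajectory_component_derivative[OF traj[OF \<xi>R[OF that]] \<xi>_pos[OF that]] by auto
  have x_pos: "V \<xi> $ 1 > 0" and z_pos: "V \<xi> $ 3 > 0" if "\<xi> \<in> {0<..b}" for \<xi>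
    using pos[OF \<xi>R[OF that]] by auto
  define \<mu> K where "\<mu> = min (l1 / 2) (l3 / 2)"
    and "K = max (V b $ 1 * b powr (- (l1 / 2))) (V b $ 3 * b powr (- (l3 / 2)))"
  \<comment> \<open>\<xi> x' \<ge> (l1/2) x and \<xi> z' \<ge> (l3/2) z, so x and z vanish like powers of \<xi>\<close>
  have xz_bound: "V \<xi> $ 1 \<le> K * \<xi> powr \<mu> \<and> V \<xi> $ 3 \<le> K * \<xi> powr \<mu>" if "\<xi> \<in> {0<..b}" for \<xi>
  proof -
    have "V \<xi> $ 1 \<le> V b $ 1 * b powr (- (l1 / 2)) * \<xi> powr \<mu>"
      using \<open>0 < b\<close> \<open>b \<le> 1\<close> _ deriv _ _ x_pos that
    proof (rule le_powr_of_growth_rate[where r = "\<lambda>\<xi>. 2 - (m - 1) * y \<xi>"])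
      show "\<mu> \<le> l1 / 2" by (simp add: \<mu>_def)
      show "t * (S2 m N \<sigma> p (V t) $ 1 / t) = V t $ 1 * (2 - (m - 1) * y t)" if "t \<in> {0<..b}" for t
        using euler[OF that, of 1] by (simp add: S2_components y_def)
      show "l1 / 2 \<le> 2 - (m - 1) * y t" if "t \<in> {0<..b}" for t
        using near[OF that] by simp
    qed
    moreover have "V \<xi> $ 3 \<le> V b $ 3 * b powr (- (l3 / 2)) * \<xi> powr \<mu>"
      using \<open>0 < b\<close> \<open>b \<le> 1\<close> _ deriv _ _ z_pos that
    proof (rule le_powr_of_growth_rate[where r = "\<lambda>\<xi>. \<sigma> + 2 + (p - m) * y \<xi>"])
      show "\<mu> \<le> l3 / 2" by (simp add: \<mu>_def)
      show "t * (S2 m N \<sigma> p (V t) $ 3 / t) = V t $ 3 * (\<sigma> + 2 + (p - m) * y t)" if "t \<in> {0<..b}" for t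
        using euler[OF that, of 3] by (simp add: S2_components y_def)
      show "l3 / 2 \<le> \<sigma> + 2 + (p - m) * y t" if "t \<in> {0<..b}" for t
        using near[OF that] by simp
    qed
    ultimately show ?thesis
      unfolding K_def by (smt (verit) mult_right_mono powr_ge_zero)
  qed
  have "\<mu> > 0" using \<open>l1 > 0\<close> \<open>l3 > 0\<close> by (simp add: \<mu>_def)
  show ?thesis
    by (rule that[OF \<open>0 < b\<close> \<open>b < R\<close> \<open>b \<le> 1\<close> \<open>\<mu> > 0\<close> xz_bound])
      (use near in \<open>auto simp: y_def n_def\<close>)
qed

lemma S2_trajectory_from_Q2_y_rate:
  assumes "m > 1" and "N \<ge> 3" and "p < m * (real N + \<sigma>) / (real N - 2)" and "R > 0"
    and traj: "\<And>\<xi>. \<xi> \<in> {0<..<R} \<Longrightarrow> (V has_vector_derivative (1 / \<xi>) *\<^sub>R S2 m N \<sigma> p (V \<xi>)) (at \<xi>)"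
    and pos: "\<And>\<xi>. \<xi> \<in> {0<..<R} \<Longrightarrow> V \<xi> $ 1 > 0 \<and> V \<xi> $ 3 > 0"
    and lim: "(V \<longlongrightarrow> Q2 m N) (at_right 0)"
  obtains b K \<delta> where "0 < b" "b < R" "\<delta> > 0"
    "\<And>\<xi>. \<xi> \<in> {0<..b} \<Longrightarrow> \<bar>V \<xi> $ 2 + (real N - 2) / m\<bar> \<le> K * \<xi> powr \<delta>"
proof -
  obtain b \<mu> K where "0 < b" "b < R" "b \<le> 1" "\<mu> > 0"
    and xz_bound: "\<And>\<xi>. \<xi> \<in> {0<..b} \<Longrightarrow> V \<xi> $ 1 \<le> K * \<xi> powr \<mu> \<and> V \<xi> $ 3 \<le> K * \<xi> powr \<mu>"
    and near: "\<And>\<xi>. \<xi> \<in> {0<..b} \<Longrightarrow> \<bar>V \<xi> $ 2 + (real N - 2) / m\<bar> < (real N - 2) / (2 * m)"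
    using S2_trajectory_near_Q2[OF assms] by blast
  define n x y z where "n = real N - 2" and "x \<xi> = V \<xi> $ 1" and "y \<xi> = V \<xi> $ 2" and "z \<xi> = V \<xi> $ 3" for \<xi>
  have "n > 0" using \<open>N \<ge> 3\<close> by (simp add: n_def)
  have \<xi>R: "\<xi> \<in> {0<..<R}" and \<xi>_pos: "\<xi> > 0" if "\<xi> \<in> {0<..b}" for \<xi>
    using that \<open>b < R\<close> by auto
  define c E where "c = (p - m) / (\<sigma> + 2)" and "E \<xi> = - x \<xi> - c * x \<xi> * y \<xi> + z \<xi>" for \<xi>
  define B where "B = 3 * n / (2 * m)"
  have E_bound: "\<bar>E \<xi>\<bar> \<le> K * (2 + \<bar>c\<bar> * B) * \<xi> powr \<mu>" if "\<xi> \<in> {0<..b}" for \<xi>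
  proof -
    have "B = n / (2 * m) + n / m" and "n / m > 0"
      using \<open>m > 1\<close> \<open>n > 0\<close> by (simp_all add: B_def field_simps)
    moreover have "\<bar>y \<xi>\<bar> \<le> \<bar>y \<xi> + n / m\<bar> + n / m"
      using abs_triangle_ineq4[of "y \<xi> + n / m" "n / m"] \<open>n / m > 0\<close> by simp
    moreover have "\<bar>y \<xi> + n / m\<bar> < n / (2 * m)" using near[OF that] by (simp add: y_def n_def)
    ultimately have "\<bar>y \<xi>\<bar> \<le> B" by linarith
    have "x \<xi> > 0" "z \<xi> > 0" using pos[OF \<xi>R[OF that]] by (simp_all add: x_def z_def)
    have "\<bar>E \<xi>\<bar> \<le> \<bar>x \<xi>\<bar> + \<bar>c * x \<xi> * y \<xi>\<bar> + \<bar>z \<xi>\<bar>"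
      unfolding E_def using abs_triangle_ineq[of "- x \<xi> - c * x \<xi> * y \<xi>" "z \<xi>"]
        abs_triangle_ineq4[of "- x \<xi>" "c * x \<xi> * y \<xi>"] by simp
    also have "\<dots> \<le> x \<xi> * (1 + \<bar>c\<bar> * B) + z \<xi>"
    proof -
      have "x \<xi> * (\<bar>c\<bar> * \<bar>y \<xi>\<bar>) \<le> x \<xi> * (\<bar>c\<bar> * B)"
        using \<open>x \<xi> > 0\<close> \<open>\<bar>y \<xi>\<bar> \<le> B\<close> by (intro mult_left_mono) auto
      then show ?thesis using \<open>x \<xi> > 0\<close> \<open>z \<xi> > 0\<close> by (simp add: abs_mult algebra_simps)
    qed
    also have "\<dots> \<le> K * \<xi> powr \<mu> * (1 + \<bar>c\<bar> * B) + K * \<xi> powr \<mu>"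
      using xz_bound[OF that] \<open>\<bar>y \<xi>\<bar> \<le> B\<close> unfolding x_def z_def
      by (intro add_mono mult_right_mono) auto
    also have "\<dots> = K * (2 + \<bar>c\<bar> * B) * \<xi> powr \<mu>" by (simp add: algebra_simps)
    finally show ?thesis .
  qed
  \<comment> \<open>near Q2 the y-equation is a repeller perturbed by terms of size \<xi>^\<mu>\<close>
  have "\<exists>C \<delta>. \<delta> > 0 \<and> (\<forall>\<xi> \<in> {0<..b}. \<bar>y \<xi> + n / m\<bar> \<le> C * \<xi> powr \<delta>)"
  proof (rule powr_decay_of_perturbed_euler_repeller[OF \<open>b > 0\<close> _ \<open>\<mu> > 0\<close>, where a = "n / 2"
        and w' = "\<lambda>\<xi>. S2 m N \<sigma> p (V \<xi>) $ 2 / \<xi>" and c = "\<lambda>\<xi>. n - m * (y \<xi> + n / m)" and E = E])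
    show "n / 2 > 0" using \<open>n > 0\<close> by simp
    fix \<xi> assume \<xi>: "\<xi> \<in> {0<..b}"
    show "((\<lambda>\<xi>. y \<xi> + n / m) has_real_derivative S2 m N \<sigma> p (V \<xi>) $ 2 / \<xi>) (at \<xi>)"
      using S2_trajectory_component_derivative(1)[OF traj[OF \<xi>R[OF \<xi>]] \<xi>_pos[OF \<xi>], of 2]
      unfolding y_def by (auto intro!: derivative_eq_intros)
    show "\<xi> * (S2 m N \<sigma> p (V \<xi>) $ 2 / \<xi>) = (n - m * (y \<xi> + n / m)) * (y \<xi> + n / m) + E \<xi>"
      using \<open>m > 1\<close> \<xi>_pos[OF \<xi>] unfolding S2_components
      by (simp add: E_def c_def x_def y_def z_def n_def field_simps power2_eq_square)
    have "y \<xi> + n / m < n / (2 * m)" using near[OF \<xi>] by (simp add: y_def n_def)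
    then have "m * (y \<xi> + n / m) < m * (n / (2 * m))"
      using \<open>m > 1\<close> by (intro mult_strict_left_mono) auto
    then show "n - m * (y \<xi> + n / m) \<ge> n / 2" using \<open>m > 1\<close> by simp
    show "\<bar>E \<xi>\<bar> \<le> K * (2 + \<bar>c\<bar> * B) * \<xi> powr \<mu>" using E_bound[OF \<xi>] .
  qed
  then obtain C \<delta> where "\<delta> > 0" and "\<forall>\<xi> \<in> {0<..b}. \<bar>y \<xi> + n / m\<bar> \<le> C * \<xi> powr \<delta>" by blast
  then show ?thesis
    using that[OF \<open>b > 0\<close> \<open>b < R\<close> \<open>\<delta> > 0\<close>, of C] by (simp add: y_def n_def)
qed

section \<open>Profiles as trajectories of (S2)\<close>

lemma is_profile_pos_deriv:
  assumes "is_profile m N \<sigma> p R f" and "\<xi> \<in> {0<..<R}"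
  shows "f \<xi> > 0" and "(f has_real_derivative deriv f \<xi>) (at \<xi>)"
  using assms DERIV_imp_deriv unfolding is_profile_def by fastforce+

lemma xyz_of_components:
  "xyz_of m \<sigma> p f \<xi> $ 1 = alpha_par m \<sigma> p / m * \<xi>^2 * f \<xi> powr (1 - m)"
  "xyz_of m \<sigma> p f \<xi> $ 2 = \<xi> * deriv f \<xi> / f \<xi>"
  "xyz_of m \<sigma> p f \<xi> $ 3 = 1 / m * \<xi> powr (\<sigma> + 2) * f \<xi> powr (p - m)"
  by (simp_all add: xyz_of_def)

lemma alpha_par_pos:
  assumes "m > 1" and "\<sigma> > 0" and "p > m"
  shows "alpha_par m \<sigma> p > 0"
proof -
  have "L_par m \<sigma> p > 0" unfolding L_par_def using assms by (simp add: add_pos_pos)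
  then show ?thesis using assms by (simp add: alpha_par_def)
qed

lemma xyz_of_x_z_pos:
  assumes "m > 1" and "\<sigma> > 0" and "p > m" and "\<xi> > 0" and "f \<xi> > 0"
  shows "xyz_of m \<sigma> p f \<xi> $ 1 > 0" and "xyz_of m \<sigma> p f \<xi> $ 3 > 0"
  using assms alpha_par_pos[OF assms(1-3)] by (simp_all add: xyz_of_components)

lemma xyz_of_x_z_derivatives:
  assumes "m > 0" and "\<xi> > 0" and "f \<xi> > 0" and "(f has_real_derivative df) (at \<xi>)"
  shows "((\<lambda>s. xyz_of m \<sigma> p f s $ 1) has_real_derivative S2 m N \<sigma> p (xyz_of m \<sigma> p f \<xi>) $ 1 / \<xi>) (at \<xi>)"
    and "((\<lambda>s. xyz_of m \<sigma> p f s $ 3) has_real_derivative S2 m N \<sigma> p (xyz_of m \<sigma> p f \<xi>) $ 3 / \<xi>) (at \<xi>)"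
proof -
  have "deriv f \<xi> = df" using assms(4) by (rule DERIV_imp_deriv)
  have e1: "\<xi> powr (\<sigma> + 2 - 1) = \<xi> powr (\<sigma> + 2) / \<xi>"
    using assms powr_diff[of \<xi> "\<sigma> + 2" 1] by simp
  have e2: "f \<xi> powr (p - m - 1) = f \<xi> powr (p - m) / f \<xi>"
    using assms powr_diff[of "f \<xi>" "p - m" 1] by simp
  show "((\<lambda>s. xyz_of m \<sigma> p f s $ 3) has_real_derivative S2 m N \<sigma> p (xyz_of m \<sigma> p f \<xi>) $ 3 / \<xi>) (at \<xi>)"
    unfolding xyz_of_components S2_components \<open>deriv f \<xi> = df\<close>
    by (rule DERIV_cong, (rule derivative_eq_intros assms refl)+, simp only: e1 e2)
      (use assms in \<open>simp add: field_simps\<close>)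
  show "((\<lambda>s. xyz_of m \<sigma> p f s $ 1) has_real_derivative S2 m N \<sigma> p (xyz_of m \<sigma> p f \<xi>) $ 1 / \<xi>) (at \<xi>)"
    unfolding xyz_of_components S2_components \<open>deriv f \<xi> = df\<close>
    by (rule DERIV_cong, (rule derivative_eq_intros assms refl)+)
      (use assms in \<open>simp add: powr_diff powr_minus field_simps power2_eq_square\<close>)
qed

(* Only f^m is twice differentiable, so y = xi f'/f is differentiated in the form xi (f^m)' / (m f^m). *)
lemma profile_y_derivative:
  fixes f G :: "real \<Rightarrow> real"
  assumes "m > 1" and "\<sigma> > 0" and "p > m" and "\<xi> > 0" and "f \<xi> > 0"
    and df: "(f has_real_derivative df) (at \<xi>)"
    and dG: "((\<lambda>s. f s powr m) has_real_derivative G \<xi>) (at \<xi>)"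
    and dG': "(G has_real_derivative G') (at \<xi>)"
    and eq: "G' + (real N - 1) / \<xi> * G \<xi> + alpha_par m \<sigma> p * f \<xi>
      + beta_par m \<sigma> p * \<xi> * df - \<xi> powr \<sigma> * f \<xi> powr p = 0"
  defines "Y \<equiv> \<lambda>s. s * G s / (m * f s powr m)"
  shows "Y \<xi> = xyz_of m \<sigma> p f \<xi> $ 2"
    and "(Y has_real_derivative S2 m N \<sigma> p (xyz_of m \<sigma> p f \<xi>) $ 2 / \<xi>) (at \<xi>)"
proof -
  define F U a b where "F = f \<xi>" and "U = f \<xi> powr m"
    and "a = alpha_par m \<sigma> p" and "b = beta_par m \<sigma> p"
  have "F > 0" "U > 0" "a > 0" using assms alpha_par_pos by (auto simp: F_def U_def a_def)
  have "((\<lambda>s. f s powr m) has_real_derivative f \<xi> powr m * (0 * ln (f \<xi>) + df * m / f \<xi>)) (at \<xi>)"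
    by (rule DERIV_powr[OF df \<open>f \<xi> > 0\<close> DERIV_const])
  then have G: "G \<xi> = m * U * df / F"
    using DERIV_unique[OF dG] by (simp add: U_def F_def)
  have "deriv f \<xi> = df" using df by (rule DERIV_imp_deriv)
  then show Y: "Y \<xi> = xyz_of m \<sigma> p f \<xi> $ 2"
    using \<open>U > 0\<close> \<open>F > 0\<close> \<open>m > 1\<close> by (simp add: Y_def G xyz_of_components F_def U_def)
  have "(Y has_real_derivative ((1 * G \<xi> + G' * \<xi>) * (m * U) - \<xi> * G \<xi> * (m * G \<xi>)) / (m * U)^2) (at \<xi>)"
    unfolding Y_def U_def power2_eq_square using \<open>U > 0\<close> \<open>m > 1\<close>
    by (intro DERIV_divide DERIV_mult[OF DERIV_ident dG'] DERIV_cmult[OF dG]) (auto simp: U_def)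
  moreover have "((1 * G \<xi> + G' * \<xi>) * (m * U) - \<xi> * G \<xi> * (m * G \<xi>)) / (m * U)^2
      = S2 m N \<sigma> p (xyz_of m \<sigma> p f \<xi>) $ 2 / \<xi>"
  proof -
    have G': "G' = - ((real N - 1) / \<xi> * G \<xi>) - a * F - b * \<xi> * df + \<xi> powr \<sigma> * f \<xi> powr p"
      using eq unfolding a_def b_def F_def by linarith
    have X: "xyz_of m \<sigma> p f \<xi> $ 1 = a / m * \<xi>^2 * F / U"
      using \<open>f \<xi> > 0\<close> by (simp add: xyz_of_components powr_diff a_def F_def U_def)
    have Z: "xyz_of m \<sigma> p f \<xi> $ 3 = 1 / m * \<xi> powr \<sigma> * \<xi>^2 * f \<xi> powr p / U"
      using \<open>f \<xi> > 0\<close> \<open>\<xi> > 0\<close>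
      by (simp add: xyz_of_components powr_diff powr_add U_def power2_eq_square)
    have c: "(p - m) / (\<sigma> + 2) = b / a"
      using \<open>a > 0\<close> \<open>\<sigma> > 0\<close> by (auto simp: a_def b_def alpha_par_def beta_par_def)
    show ?thesis
      unfolding S2_components X Z c Y[symmetric] unfolding Y_def G' G U_def[symmetric]
      using \<open>\<xi> > 0\<close> \<open>F > 0\<close> \<open>U > 0\<close> \<open>a > 0\<close> \<open>m > 1\<close>
      by (simp add: field_simps power2_eq_square)
  qed
  ultimately show "(Y has_real_derivative S2 m N \<sigma> p (xyz_of m \<sigma> p f \<xi>) $ 2 / \<xi>) (at \<xi>)"
    by simp
qed

lemma profile_solves_S2:
  assumes "m > 1" and "\<sigma> > 0" and "p > m" and "is_profile m N \<sigma> p R f" and "\<xi> \<in> {0<..<R}"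
  shows "(xyz_of m \<sigma> p f has_vector_derivative (1 / \<xi>) *\<^sub>R S2 m N \<sigma> p (xyz_of m \<sigma> p f \<xi>)) (at \<xi>)"
proof (rule has_vector_derivative_componentwise)
  obtain df g1 g2 where P: "\<forall>s \<in> {0<..<R}. f s > 0 \<and>
      (f has_real_derivative df s) (at s) \<and>
      ((\<lambda>s. f s powr m) has_real_derivative g1 s) (at s) \<and>
      (g1 has_real_derivative g2 s) (at s) \<and>
      g2 s + (real N - 1) / s * g1 s + alpha_par m \<sigma> p * f s
        + beta_par m \<sigma> p * s * df s - s powr \<sigma> * f s powr p = 0"
    using assms(4) unfolding is_profile_def by blast
  have profile_at: "f s > 0" "(f has_real_derivative df s) (at s)"
    "((\<lambda>s. f s powr m) has_real_derivative g1 s) (at s)" "(g1 has_real_derivative g2 s) (at s)"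
    "g2 s + (real N - 1) / s * g1 s + alpha_par m \<sigma> p * f s
        + beta_par m \<sigma> p * s * df s - s powr \<sigma> * f s powr p = 0"
    if "s \<in> {0<..<R}" for s
    using P that by auto
  have "\<xi> > 0" using assms(5) by simp
  fix i :: 3
  have "((\<lambda>s. xyz_of m \<sigma> p f s $ 2) has_real_derivative S2 m N \<sigma> p (xyz_of m \<sigma> p f \<xi>) $ 2 / \<xi>) (at \<xi>)"
  proof (rule has_field_derivative_transform_within_open)
    show "((\<lambda>s. s * g1 s / (m * f s powr m)) has_real_derivative S2 m N \<sigma> p (xyz_of m \<sigma> p f \<xi>) $ 2 / \<xi>) (at \<xi>)"
      using assms(5) profile_at[OF assms(5)]
      by (intro profile_y_derivative(2)[OF assms(1-3), where df = "df \<xi>" and G' = "g2 \<xi>"]) auto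
    show "s * g1 s / (m * f s powr m) = xyz_of m \<sigma> p f s $ 2" if "s \<in> {0<..<R}" for s
      using that profile_at[OF that]
      by (intro profile_y_derivative(1)[OF assms(1-3), where df = "df s" and G' = "g2 s"]) auto
  qed (use assms(5) in auto)
  moreover have "((\<lambda>s. xyz_of m \<sigma> p f s $ j) has_real_derivative S2 m N \<sigma> p (xyz_of m \<sigma> p f \<xi>) $ j / \<xi>) (at \<xi>)"
    if "j = 1 \<or> j = 3" for j
    using xyz_of_x_z_derivatives[OF _ \<open>\<xi> > 0\<close> profile_at(1,2)] that \<open>m > 1\<close> assms(5) by auto
  ultimately show "((\<lambda>s. xyz_of m \<sigma> p f s $ i) has_real_derivative ((1 / \<xi>) *\<^sub>R S2 m N \<sigma> p (xyz_of m \<sigma> p f \<xi>)) $ i) (at \<xi>)"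
    using exhaust_3[of i] by auto
qed

lemma xyz_of_tendsto_at_right_0:
  assumes "profile_traj_from m \<sigma> p f Q"
  shows "(xyz_of m \<sigma> p f \<longlongrightarrow> Q) (at_right 0)"
proof -
  have "((\<lambda>\<xi>. xyz_of m \<sigma> p f (exp (ln \<xi>))) \<longlongrightarrow> Q) (at_right 0)"
    using filterlim_compose[OF assms[unfolded profile_traj_from_def] ln_at_0] by simp
  then show ?thesis
    by (rule tendsto_cong[THEN iffD1, rotated]) (auto simp: eventually_at_right_field intro!: exI[of _ 1])
qed

lemma profile_asymptotics_Q3:
  assumes "m > 0" and "p > m" and "Z0 m N \<sigma> p > 0"
    and "is_profile m N \<sigma> p R f" and "R > 0" and "profile_traj_from m \<sigma> p f (Q3 m N \<sigma> p)"
  shows "\<exists>C > 0. ((\<lambda>\<xi>. f \<xi> / \<xi> powr (- (\<sigma> + 2) / (p - m))) \<longlongrightarrow> C) (at_right 0)"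
proof -
  define z where "z \<xi> = xyz_of m \<sigma> p f \<xi> $ 3" for \<xi>
  have "(z \<longlongrightarrow> Z0 m N \<sigma> p) (at_right 0)"
    unfolding z_def using tendsto_vec_nth[OF xyz_of_tendsto_at_right_0[OF assms(6)], of 3]
    by (simp add: Q3_components)
  then have "((\<lambda>\<xi>. (m * z \<xi>) powr (1 / (p - m))) \<longlongrightarrow> (m * Z0 m N \<sigma> p) powr (1 / (p - m))) (at_right 0)"
    using assms(1,3) by (intro tendsto_intros) auto
  moreover have "(m * z \<xi>) powr (1 / (p - m)) = f \<xi> / \<xi> powr (- (\<sigma> + 2) / (p - m))"
    if "\<xi> \<in> {0<..<R}" for \<xi>
  proof -
    have "f \<xi> > 0" using is_profile_pos_deriv(1)[OF assms(4) that] .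
    have "(m * z \<xi>) powr (1 / (p - m)) = (\<xi> powr (\<sigma> + 2) * f \<xi> powr (p - m)) powr (1 / (p - m))"
      using assms(1) by (simp add: z_def xyz_of_components)
    also have "\<dots> = \<xi> powr ((\<sigma> + 2) / (p - m)) * f \<xi>"
      using that \<open>f \<xi> > 0\<close> assms(2) by (simp add: powr_mult powr_powr)
    also have "\<dots> = f \<xi> / \<xi> powr (- ((\<sigma> + 2) / (p - m)))"
      by (simp add: powr_minus divide_inverse mult.commute)
    finally show ?thesis by (simp add: minus_divide_left)
  qed
  then have "eventually (\<lambda>\<xi>. (m * z \<xi>) powr (1 / (p - m)) = f \<xi> / \<xi> powr (- (\<sigma> + 2) / (p - m))) (at_right 0)"
    using \<open>R > 0\<close> by (intro eventually_at_rightI[of 0 R]) auto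
  ultimately have "((\<lambda>\<xi>. f \<xi> / \<xi> powr (- (\<sigma> + 2) / (p - m))) \<longlongrightarrow> (m * Z0 m N \<sigma> p) powr (1 / (p - m))) (at_right 0)"
    by (rule tendsto_cong[THEN iffD1, rotated])
  then show ?thesis using assms(1,3) by (intro exI[of _ "(m * Z0 m N \<sigma> p) powr (1 / (p - m))"]) auto
qed

lemma profile_asymptotics_Q2:
  assumes "m > 1" and "\<sigma> > 0" and "p > m" and "N \<ge> 3"
    and "p \<noteq> m * (real N + \<sigma>) / (real N - 2)"
    and profile: "is_profile m N \<sigma> p R f" and "R > 0"
    and "profile_traj_from m \<sigma> p f (Q2 m N)"
  shows "\<exists>C > 0. ((\<lambda>\<xi>. f \<xi> / \<xi> powr (- (real N - 2) / m)) \<longlongrightarrow> C) (at_right 0)"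
proof -
  let ?V = "xyz_of m \<sigma> p f"
  note f_pos = is_profile_pos_deriv(1)[OF profile] and f_deriv = is_profile_pos_deriv(2)[OF profile]
  have traj: "(?V has_vector_derivative (1 / \<xi>) *\<^sub>R S2 m N \<sigma> p (?V \<xi>)) (at \<xi>)"
    if "\<xi> \<in> {0<..<R}" for \<xi>
    using profile_solves_S2[OF assms(1-3) profile that] .
  have pos: "?V \<xi> $ 1 > 0 \<and> ?V \<xi> $ 3 > 0" if "\<xi> \<in> {0<..<R}" for \<xi>
    using xyz_of_x_z_pos[OF assms(1-3), of \<xi> f] f_pos[OF that] that by simp
  have lim: "(?V \<longlongrightarrow> Q2 m N) (at_right 0)"
    using xyz_of_tendsto_at_right_0 assms(8) .
  have "\<not> p > m * (real N + \<sigma>) / (real N - 2)"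
  proof
    assume above: "p > m * (real N + \<sigma>) / (real N - 2)"
    show False
      by (rule S2_trajectory_not_from_Q2_above_critical[OF _ \<open>N \<ge> 3\<close> above \<open>R > 0\<close> traj _ lim])
        (use \<open>m > 1\<close> pos in auto)
  qed
  then have "p < m * (real N + \<sigma>) / (real N - 2)" using assms(5) by linarith
  then obtain b K \<delta> where "0 < b" "b < R" "\<delta> > 0"
    and y_rate: "\<And>\<xi>. \<xi> \<in> {0<..b} \<Longrightarrow> \<bar>?V \<xi> $ 2 + (real N - 2) / m\<bar> \<le> K * \<xi> powr \<delta>"
    by (rule S2_trajectory_from_Q2_y_rate[OF \<open>m > 1\<close> \<open>N \<ge> 3\<close> _ \<open>R > 0\<close> traj pos lim]) blast+
  \<comment> \<open>ln f + (N-2)/m ln \<xi> has Euler derivative y + (N-2)/m\<close>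
  define \<phi> where "\<phi> \<xi> = ln (f \<xi>) + (real N - 2) / m * ln \<xi>" for \<xi>
  have "\<exists>L. (\<phi> \<longlongrightarrow> L) (at_right 0)"
  proof (rule convergent_at_right_0_of_euler_derivative_bound[OF \<open>b > 0\<close> \<open>\<delta> > 0\<close>])
    fix \<xi> assume "\<xi> \<in> {0<..b}"
    then have \<xi>: "\<xi> \<in> {0<..<R}" "\<xi> > 0" using \<open>b < R\<close> by auto
    show "(\<phi> has_real_derivative deriv f \<xi> / f \<xi> + (real N - 2) / m * (1 / \<xi>)) (at \<xi>)"
      unfolding \<phi>_def using f_pos[OF \<xi>(1)] f_deriv[OF \<xi>(1)] \<xi>(2) \<open>m > 1\<close>
      by (auto intro!: derivative_eq_intros)
    have "\<xi> * (deriv f \<xi> / f \<xi> + (real N - 2) / m * (1 / \<xi>)) = ?V \<xi> $ 2 + (real N - 2) / m"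
      using \<xi>(2) \<open>m > 1\<close> by (simp add: xyz_of_components field_simps)
    then show "\<bar>\<xi> * (deriv f \<xi> / f \<xi> + (real N - 2) / m * (1 / \<xi>))\<bar> \<le> K * \<xi> powr \<delta>"
      using y_rate[OF \<open>\<xi> \<in> {0<..b}\<close>] by simp
  qed
  then obtain L where "(\<phi> \<longlongrightarrow> L) (at_right 0)" by blast
  then have "((\<lambda>\<xi>. exp (\<phi> \<xi>)) \<longlongrightarrow> exp L) (at_right 0)" by (rule tendsto_exp)
  moreover have "exp (\<phi> \<xi>) = f \<xi> / \<xi> powr (- (real N - 2) / m)" if "\<xi> \<in> {0<..<R}" for \<xi>
  proof -
    have e: "- (real N - 2) / m = - ((real N - 2) / m)" by (rule minus_divide_left[symmetric])
    show ?thesis unfolding e powr_minus \<phi>_def using f_pos[OF that] that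
      by (simp add: exp_add powr_def divide_inverse mult.commute)
  qed
  then have "eventually (\<lambda>\<xi>. exp (\<phi> \<xi>) = f \<xi> / \<xi> powr (- (real N - 2) / m)) (at_right 0)"
    using \<open>R > 0\<close> by (intro eventually_at_rightI[of 0 R]) auto
  ultimately show ?thesis
    by (intro exI[of _ "exp L"]) (auto elim: tendsto_cong[THEN iffD1, rotated])
qed

theorem lemma2p5:
  fixes m \<sigma> p :: real and N :: nat
  assumes hm: "m > 1" and h\<sigma>: "\<sigma> > 0" and hp: "p > m" and hN: "N \<ge> 3"
  shows
    "(p < m * (real N + \<sigma>) / (real N - 2) \<longrightarrow>
        unstable_node (S2 m N \<sigma> p) (Q2 m N))
   \<and> (p > m * (real N + \<sigma>) / (real N - 2) \<longrightarrow>
        saddle_point (S2 m N \<sigma> p) (Q2 m N)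
      \<and> unstable_manifold_dim (S2 m N \<sigma> p) (Q2 m N) 2
      \<and> stable_manifold_dim (S2 m N \<sigma> p) (Q2 m N) 1
      \<and> unstable_manifold (S2 m N \<sigma> p) (Q2 m N) \<subseteq> {v. v$3 = 0}
      \<and> stable_manifold (S2 m N \<sigma> p) (Q2 m N) \<subseteq> {v. v$1 = 0})
   \<and> (p < m * (real N + \<sigma>) / (real N - 2) \<longrightarrow>
        saddle_point (S2 m N \<sigma> p) (Q3 m N \<sigma> p)
      \<and> unstable_manifold_dim (S2 m N \<sigma> p) (Q3 m N \<sigma> p) 2
      \<and> stable_manifold_dim (S2 m N \<sigma> p) (Q3 m N \<sigma> p) 1
      \<and> stable_manifold (S2 m N \<sigma> p) (Q3 m N \<sigma> p) \<subseteq> {v. v$1 = 0})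
   \<and> (p \<noteq> m * (real N + \<sigma>) / (real N - 2) \<longrightarrow>
        (\<forall>R f. R > 0 \<and> is_profile m N \<sigma> p R f \<and> profile_traj_from m \<sigma> p f (Q2 m N) \<longrightarrow>
           (\<exists>C > 0. ((\<lambda>\<xi>. f \<xi> / \<xi> powr (- (real N - 2) / m)) \<longlongrightarrow> C) (at_right 0))))
   \<and> (p < m * (real N + \<sigma>) / (real N - 2) \<longrightarrow>
        (\<forall>R f. R > 0 \<and> is_profile m N \<sigma> p R f \<and> profile_traj_from m \<sigma> p f (Q3 m N \<sigma> p) \<longrightarrow>
           (\<exists>C > 0. ((\<lambda>\<xi>. f \<xi> / \<xi> powr (- (\<sigma> + 2) / (p - m))) \<longlongrightarrow> C) (at_right 0))))"
proof -
  have "m > 0" using hm by simp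
  show ?thesis
    using Q2_unstable_node[OF hm hN] Q2_saddle[OF hm hN] Q3_saddle[OF hm h\<sigma> hp hN]
      profile_asymptotics_Q2[OF hm h\<sigma> hp hN]
      profile_asymptotics_Q3[OF \<open>m > 0\<close> hp Z0_pos[OF hp h\<sigma> hN]]
    by blast
qed

end
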